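(* The unrestricted black box complexity of the class of affine OneMax functions satisfies $B_{\mathcal{F}}=O(n^{10}\log^2 n)$.
   Context: Identify $\{0,1\}$ with $\mathbb{F}_2$. $\ell(x)=\sum_{i=1}^n x_i$ (real sum). $\mathcal{F}$ is the set of functions $f(x)=\ell(Mx+b)$ on $\{0,1\}^n$ with $M\in\mathrm{GL}(n,\mathbb{F}_2)$, $b\in\mathbb{F}_2^n$ ($Mx+b$ over $\mathbb{F}_2$). For a class $\mathcal{C}$ of functions $\{0,1\}^n\to\mathbb{R}$, its (unrestricted) black box complexity is $B_{\mathcal{C}}=\inf_{A}\sup_{f\in\mathcal{C}}\mathbb{E}(T(A,f))$, where $A$ ranges over all randomized black-box search algorithms (which adaptively query function values) and $T(A,f)$ is the number of evaluations of $f$ made by $A$ until a global maximizer of $f$ is evaluated for the first time. *)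

theory Defs
  imports "HOL-Probability.Probability" "HOL-Library.Z2" "Jordan_Normal_Form.Matrix"
begin

definition onemax :: "nat \<Rightarrow> bit Matrix.vec \<Rightarrow> real" where
  "onemax n y = (\<Sum>i<n. if Matrix.vec_index y i = 1 then 1 else 0)"

definition affine_onemax :: "nat \<Rightarrow> (bit Matrix.vec \<Rightarrow> real) set" where
  "affine_onemax n = {f. \<exists>M b. M \<in> carrier_mat n n \<and> invertible_mat M \<and> b \<in> carrier_vec n
      \<and> f = (\<lambda>x. onemax n (Matrix.mult_mat_vec M x + b))}"

text \<open>A randomized black-box algorithm: given the history of queried points and their
  function values, it chooses a probability distribution for the next query.\<close>
type_synonym bb_alg = "(bit Matrix.vec \<times> real) list \<Rightarrow> bit Matrix.vec pmf"

definition valid_alg :: "nat \<Rightarrow> bb_alg \<Rightarrow> bool" where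
  "valid_alg n A = (\<forall>h. set_pmf (A h) \<subseteq> carrier_vec n)"

fun hist :: "bb_alg \<Rightarrow> (bit Matrix.vec \<Rightarrow> real) \<Rightarrow> nat \<Rightarrow> (bit Matrix.vec \<times> real) list pmf" where
  "hist A f 0 = return_pmf []"
| "hist A f (Suc t) = bind_pmf (hist A f t) (\<lambda>h. map_pmf (\<lambda>x. h @ [(x, f x)]) (A h))"

definition maximizers :: "nat \<Rightarrow> (bit Matrix.vec \<Rightarrow> real) \<Rightarrow> bit Matrix.vec set" where
  "maximizers n f = {x \<in> carrier_vec n. \<forall>y \<in> carrier_vec n. f y \<le> f x}"

text \<open>E(T(A,f)) = sum over t \<ge> 0 of Pr[T > t], where T > t iff none of the first t queries
  is a global maximizer.\<close>
definition expected_runtime :: "nat \<Rightarrow> bb_alg \<Rightarrow> (bit Matrix.vec \<Rightarrow> real) \<Rightarrow> ennreal" where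
  "expected_runtime n A f =
     (\<Sum>t. ennreal (measure_pmf.prob (hist A f t) {h. \<forall>p \<in> set h. fst p \<notin> maximizers n f}))"

definition bb_complexity :: "nat \<Rightarrow> (bit Matrix.vec \<Rightarrow> real) set \<Rightarrow> ennreal" where
  "bb_complexity n C = (INF A \<in> {A. valid_alg n A}. SUP f \<in> C. expected_runtime n A f)"

end

(*
  Every affine OneMax function x |-> OneMax (M x + b) is, on F_2^n, the sum of the n indicators
  x |-> [r_i . x + b_i = 1] of affine hyperplanes, r_i the rows of M. Each such indicator has all its Walsh coefficients in (2^n / 2) Z, so the difference h of
  two such sums that differ somewhere has a nonzero Walsh coefficient of absolute value at least
  2^n / 2; as |h| <= n, h is nonzero on at least a 1/(2n) fraction of the cube. A union bound over
  the at most 2^(2n(n+1)) pairs of parameter lists yields a fixed list of 2n(2n(n+1)+1) points on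
  which any two affine OneMax functions that differ somewhere already differ. Querying these
  points and then a maximizer of any function of the class consistent with the answers finds
  the optimum with O(n^3) queries, well within the claimed O(n^10 log^2 n).
*)

theory Submission
  imports Defs
begin

lemma UNIV_bit: "(UNIV :: bit set) = {0, 1}"
  by (auto intro: bit.exhaust)

lemma finite_UNIV_bit: "finite (UNIV :: bit set)"
  unfolding UNIV_bit by (rule finite.insertI) simp

lemma card_UNIV_bit: "card (UNIV :: bit set) = 2"
  unfolding UNIV_bit by simp

lemma bij_betw_list_of_vec: "bij_betw list_of_vec (carrier_vec n) {xs. length xs = n}"
proof (rule bij_betwI[where g = vec_of_list])
  show "list_of_vec \<in> carrier_vec n \<rightarrow> {xs. length xs = n}"
    by (auto dest: carrier_vecD)
  show "vec_of_list \<in> {xs. length xs = n} \<rightarrow> carrier_vec n"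
    by (auto intro: carrier_vecI)
qed (simp_all add: vec_list list_vec)

lemma finite_bit_vecs: "finite (carrier_vec n :: bit Matrix.vec set)"
proof -
  have "finite {xs :: bit list. length xs = n}"
    using finite_lists_length_eq[OF finite_UNIV_bit] by simp
  then show ?thesis
    using bij_betw_finite[OF bij_betw_list_of_vec] by blast
qed

lemma card_bit_vecs: "card (carrier_vec n :: bit Matrix.vec set) = 2 ^ n"
proof -
  have "card {xs :: bit list. length xs = n} = 2 ^ n"
    using card_lists_length_eq[OF finite_UNIV_bit] by (simp add: card_UNIV_bit)
  then show ?thesis
    using bij_betw_same_card[OF bij_betw_list_of_vec] by metis
qed

lemma bit_add_self [simp]: "(b :: bit) + b = 0"
  by (cases b) simp_all

lemma bit_vec_add_self:
  assumes "(x :: bit Matrix.vec) \<in> carrier_vec n"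
  shows "x + x = 0\<^sub>v n"
  using assms by (intro eq_vecI) auto

lemma bit_vec_add_eq_zero_iff:
  assumes "(a :: bit Matrix.vec) \<in> carrier_vec n" "b \<in> carrier_vec n"
  shows "a + b = 0\<^sub>v n \<longleftrightarrow> a = b"
proof
  assume sum_zero: "a + b = 0\<^sub>v n"
  have "a = a + (b + b)"
    using assms by (simp add: bit_vec_add_self)
  also have "\<dots> = (a + b) + b"
    using assms by simp
  finally show "a = b"
    using sum_zero assms by simp
qed (use assms bit_vec_add_self in auto)

section \<open>Walsh characters\<close>

definition walsh :: "bit Matrix.vec \<Rightarrow> bit Matrix.vec \<Rightarrow> real" where
  "walsh a x = (if scalar_prod a x = 0 then 1 else -1)"

lemma abs_walsh [simp]: "\<bar>walsh a x\<bar> = 1"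
  by (simp add: walsh_def)

lemma walsh_add_right:
  assumes "a \<in> carrier_vec n" "x \<in> carrier_vec n" "y \<in> carrier_vec n"
  shows "walsh a (x + y) = walsh a x * walsh a y"
  using scalar_prod_add_distrib[OF assms]
  by (cases "scalar_prod a x"; cases "scalar_prod a y") (simp_all add: walsh_def)

lemma walsh_add_left:
  assumes "a \<in> carrier_vec n" "b \<in> carrier_vec n" "x \<in> carrier_vec n"
  shows "walsh (a + b) x = walsh a x * walsh b x"
  using add_scalar_prod_distrib[OF assms]
  by (cases "scalar_prod a x"; cases "scalar_prod b x") (simp_all add: walsh_def)

lemma walsh_commute:
  assumes "a \<in> carrier_vec n" "x \<in> carrier_vec n"
  shows "walsh a x = walsh x a"
  using comm_scalar_prod[OF assms] by (simp add: walsh_def)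

lemma sum_walsh:
  assumes w: "w \<in> carrier_vec n"
  shows "(\<Sum>x\<in>carrier_vec n. walsh w x) = (if w = 0\<^sub>v n then 2 ^ n else 0)"
proof (cases "w = 0\<^sub>v n")
  case True
  then show ?thesis by (simp add: walsh_def card_bit_vecs)
next
  case False
  then obtain j where j: "j < n" "vec_index w j = 1"
    using w by (metis bit_not_zero_iff carrier_vecD eq_vecI index_zero_vec)
  define e where "e = (unit_vec n j :: bit Matrix.vec)"
  have e: "e \<in> carrier_vec n" and we: "scalar_prod w e = 1"
    unfolding e_def using j w by simp_all
  \<comment> \<open>Translation by \<open>e\<close> permutes the cube and flips the sign of \<open>walsh w\<close>.\<close>
  have "bij_betw (\<lambda>x. x + e) (carrier_vec n) (carrier_vec n)"
    by (rule bij_betwI[where g = "\<lambda>x. x + e"]) (use e bit_vec_add_self in auto)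
  then have "(\<Sum>x\<in>carrier_vec n. walsh w x) = (\<Sum>x\<in>carrier_vec n. walsh w (x + e))"
    by (rule sum.reindex_bij_betw[symmetric])
  also have "\<dots> = (\<Sum>x\<in>carrier_vec n. - walsh w x)"
    using walsh_add_right[OF w _ e] we by (intro sum.cong) (simp_all add: walsh_def)
  finally show ?thesis
    using False by (simp add: sum_negf)
qed

lemma walsh_orthogonal:
  assumes "a \<in> carrier_vec n" "b \<in> carrier_vec n"
  shows "(\<Sum>x\<in>carrier_vec n. walsh a x * walsh b x) = (if a = b then 2 ^ n else 0)"
proof -
  have "(\<Sum>x\<in>carrier_vec n. walsh a x * walsh b x) = (\<Sum>x\<in>carrier_vec n. walsh (a + b) x)"
    using walsh_add_left[OF assms] by simp
  then show ?thesis
    using sum_walsh[of "a + b" n] assms by (simp add: bit_vec_add_eq_zero_iff)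
qed

definition walsh_coeff :: "nat \<Rightarrow> (bit Matrix.vec \<Rightarrow> real) \<Rightarrow> bit Matrix.vec \<Rightarrow> real" where
  "walsh_coeff n h a = (\<Sum>x\<in>carrier_vec n. h x * walsh a x)"

lemma walsh_coeff_add:
  "walsh_coeff n (\<lambda>x. f x + g x) a = walsh_coeff n f a + walsh_coeff n g a"
  by (simp add: walsh_coeff_def distrib_right sum.distrib)

lemma walsh_coeff_diff:
  "walsh_coeff n (\<lambda>x. f x - g x) a = walsh_coeff n f a - walsh_coeff n g a"
  by (simp add: walsh_coeff_def left_diff_distrib sum_subtractf)

lemma abs_walsh_coeff_le: "\<bar>walsh_coeff n h a\<bar> \<le> (\<Sum>x\<in>carrier_vec n. \<bar>h x\<bar>)"
  unfolding walsh_coeff_def using sum_abs[of "\<lambda>x. h x * walsh a x"] by (simp add: abs_mult)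

lemma walsh_inversion:
  assumes y: "y \<in> carrier_vec n"
  shows "(\<Sum>a\<in>carrier_vec n. walsh a y * walsh_coeff n h a) = 2 ^ n * h y"
proof -
  have "(\<Sum>a\<in>carrier_vec n. walsh a y * walsh_coeff n h a)
      = (\<Sum>x\<in>carrier_vec n. h x * (\<Sum>a\<in>carrier_vec n. walsh x a * walsh y a))"
    unfolding walsh_coeff_def sum_distrib_left
    by (subst sum.swap) (auto intro!: sum.cong simp: walsh_commute[of _ n] y)
  also have "\<dots> = (\<Sum>x\<in>carrier_vec n. if x = y then 2 ^ n * h y else 0)"
    by (intro sum.cong) (simp_all add: walsh_orthogonal y)
  finally show ?thesis
    using y finite_bit_vecs by simp
qed

lemma exists_walsh_coeff_nonzero:
  assumes "y \<in> carrier_vec n" "h y \<noteq> 0"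
  shows "\<exists>a\<in>carrier_vec n. walsh_coeff n h a \<noteq> 0"
proof (rule ccontr)
  assume "\<not> ?thesis"
  then have "(\<Sum>a\<in>carrier_vec n. walsh a y * walsh_coeff n h a) = 0"
    by simp
  then show False
    using walsh_inversion[OF assms(1), of h] assms(2) by simp
qed

section \<open>Sums of indicators of affine hyperplanes\<close>

definition affine_indicator :: "bit Matrix.vec \<Rightarrow> bit \<Rightarrow> bit Matrix.vec \<Rightarrow> real" where
  "affine_indicator r c x = (if scalar_prod r x + c = 1 then 1 else 0)"

definition affine_indicator_sum :: "(bit Matrix.vec \<times> bit) list \<Rightarrow> bit Matrix.vec \<Rightarrow> real" where
  "affine_indicator_sum ps x = (\<Sum>(r, c)\<leftarrow>ps. affine_indicator r c x)"

lemma affine_indicator_sum_Nil [simp]: "affine_indicator_sum [] = (\<lambda>x. 0)"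
  by (simp add: affine_indicator_sum_def fun_eq_iff)

lemma affine_indicator_sum_Cons [simp]:
  "affine_indicator_sum ((r, c) # ps) = (\<lambda>x. affine_indicator r c x + affine_indicator_sum ps x)"
  by (simp add: affine_indicator_sum_def fun_eq_iff)

lemma affine_indicator_sum_bounds:
  "0 \<le> affine_indicator_sum ps x" "affine_indicator_sum ps x \<le> length ps"
  by (induction ps) (auto simp: affine_indicator_def)

lemma affine_indicator_eq_walsh:
  "affine_indicator r c x = (1 - (if c = 0 then 1 else -1) * walsh r x) / 2"
  by (cases c; cases "scalar_prod r x") (simp_all add: affine_indicator_def walsh_def)

lemma walsh_coeff_affine_indicator:
  assumes "r \<in> carrier_vec n" "a \<in> carrier_vec n"
  shows "walsh_coeff n (affine_indicator r c) a
    = 2 ^ n / 2 * (of_bool (a = 0\<^sub>v n) - of_bool (r = a) * (if c = 0 then 1 else -1))"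
proof -
  define s :: real where "s = (if c = 0 then 1 else -1)"
  have "walsh_coeff n (affine_indicator r c) a
      = (\<Sum>x\<in>carrier_vec n. walsh a x / 2 - s / 2 * (walsh r x * walsh a x))"
    unfolding walsh_coeff_def affine_indicator_eq_walsh s_def[symmetric]
    by (intro sum.cong) (simp_all add: field_simps)
  also have "\<dots> = (\<Sum>x\<in>carrier_vec n. walsh a x) / 2
      - s / 2 * (\<Sum>x\<in>carrier_vec n. walsh r x * walsh a x)"
    by (simp add: sum_subtractf sum_divide_distrib sum_distrib_left)
  finally show ?thesis
    using sum_walsh[OF assms(2)] walsh_orthogonal[OF assms] by (simp add: s_def)
qed

lemma walsh_coeff_affine_indicator_sum_Ints:
  assumes "set ps \<subseteq> carrier_vec n \<times> UNIV" "a \<in> carrier_vec n"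
  shows "2 * walsh_coeff n (affine_indicator_sum ps) a / 2 ^ n \<in> \<int>"
  using assms(1)
proof (induction ps)
  case Nil
  then show ?case by (simp add: walsh_coeff_def)
next
  case (Cons p ps)
  obtain r c where p: "p = (r, c)" by fastforce
  have r: "r \<in> carrier_vec n"
    using Cons.prems p by auto
  have "2 * walsh_coeff n (affine_indicator r c) a / 2 ^ n \<in> \<int>"
    by (simp add: walsh_coeff_affine_indicator[OF r assms(2)])
  with Cons show ?case
    by (simp add: p walsh_coeff_add add_divide_distrib distrib_left)
qed

lemma card_support_ge_if_half_integral_walsh_coeffs:
  fixes h :: "bit Matrix.vec \<Rightarrow> real"
  assumes integral: "\<And>a. a \<in> carrier_vec n \<Longrightarrow> 2 * walsh_coeff n h a / 2 ^ n \<in> \<int>"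
    and bounded: "\<And>x. x \<in> carrier_vec n \<Longrightarrow> \<bar>h x\<bar> \<le> k"
    and y: "y \<in> carrier_vec n" "h y \<noteq> 0"
  shows "2 ^ n \<le> 2 * k * card {x \<in> carrier_vec n. h x \<noteq> 0}"
proof -
  obtain a where a: "a \<in> carrier_vec n" "walsh_coeff n h a \<noteq> 0"
    using exists_walsh_coeff_nonzero[of y n h] y by blast
  have "1 \<le> \<bar>2 * walsh_coeff n h a / 2 ^ n\<bar>"
    using Ints_nonzero_abs_ge1[OF integral[OF a(1)]] a(2) by simp
  then have "2 ^ n \<le> 2 * \<bar>walsh_coeff n h a\<bar>"
    by (simp add: field_simps)
  also have "\<dots> \<le> 2 * (\<Sum>x\<in>carrier_vec n. \<bar>h x\<bar>)"
    using abs_walsh_coeff_le by simp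
  also have "(\<Sum>x\<in>carrier_vec n. \<bar>h x\<bar>) = (\<Sum>x\<in>{x \<in> carrier_vec n. h x \<noteq> 0}. \<bar>h x\<bar>)"
    by (rule sum.mono_neutral_right) (auto simp: finite_bit_vecs)
  also have "\<dots> \<le> k * card {x \<in> carrier_vec n. h x \<noteq> 0}"
    using sum_bounded_above[of "{x \<in> carrier_vec n. h x \<noteq> 0}" "\<lambda>x. \<bar>h x\<bar>" k] bounded
    by (simp add: mult.commute)
  finally show ?thesis
    by (simp add: mult.assoc)
qed

lemma card_disagreement_ge:
  assumes ps: "set ps \<subseteq> carrier_vec n \<times> UNIV" "length ps \<le> k"
    and qs: "set qs \<subseteq> carrier_vec n \<times> UNIV" "length qs \<le> k"
    and y: "y \<in> carrier_vec n" "affine_indicator_sum ps y \<noteq> affine_indicator_sum qs y"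
  shows "2 ^ n \<le> 2 * real k * card {x \<in> carrier_vec n. affine_indicator_sum ps x \<noteq> affine_indicator_sum qs x}"
proof -
  define h where "h x = affine_indicator_sum ps x - affine_indicator_sum qs x" for x
  have "2 * walsh_coeff n h a / 2 ^ n \<in> \<int>" if "a \<in> carrier_vec n" for a
    using walsh_coeff_affine_indicator_sum_Ints[OF ps(1) that]
      walsh_coeff_affine_indicator_sum_Ints[OF qs(1) that]
    unfolding h_def walsh_coeff_diff by (simp add: diff_divide_distrib right_diff_distrib)
  moreover have "\<bar>h x\<bar> \<le> real k" for x
    using affine_indicator_sum_bounds[of ps x] affine_indicator_sum_bounds[of qs x] ps(2) qs(2)
    unfolding h_def by linarith
  ultimately show ?thesis
    using card_support_ge_if_half_integral_walsh_coeffs[of n h "real k" y] y unfolding h_def by simp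
qed

section \<open>Distinguishing lists\<close>

text \<open>The union bound for a uniformly random list of length \<open>m\<close>, phrased by counting lists.\<close>

lemma exists_list_not_subset_any:
  fixes E :: "'i \<Rightarrow> 'a set" and q :: real
  assumes V: "finite V" "V \<noteq> {}" and P: "finite P"
    and E_sub: "\<And>p. p \<in> P \<Longrightarrow> E p \<subseteq> V"
    and E_small: "\<And>p. p \<in> P \<Longrightarrow> real (card (E p)) \<le> q * card V"
    and union_bound: "card P * q ^ m < 1"
  shows "\<exists>xs. set xs \<subseteq> V \<and> length xs = m \<and> (\<forall>p\<in>P. \<not> set xs \<subseteq> E p)"
proof -
  define lists where "lists A = {xs. set xs \<subseteq> A \<and> length xs = m}" for A :: "'a set"
  have fin_E: "finite (E p)" if "p \<in> P" for p
    using E_sub[OF that] V(1) by (rule finite_subset)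
  have "real (card (\<Union>p\<in>P. lists (E p))) \<le> (\<Sum>p\<in>P. real (card (lists (E p))))"
    unfolding of_nat_sum[symmetric] of_nat_le_iff by (rule card_UN_le[OF P])
  also have "\<dots> = (\<Sum>p\<in>P. real (card (E p)) ^ m)"
    by (intro sum.cong) (simp_all add: lists_def card_lists_length_eq fin_E)
  also have "\<dots> \<le> (\<Sum>p\<in>P. (q * card V) ^ m)"
    by (intro sum_mono power_mono E_small) simp_all
  also have "\<dots> = (card P * q ^ m) * real (card V) ^ m"
    by (simp add: power_mult_distrib)
  also have "\<dots> < real (card V) ^ m"
    using union_bound V by (simp add: card_gt_0_iff)
  also have "\<dots> = real (card (lists V))"
    by (simp add: lists_def card_lists_length_eq V(1))
  finally have "card (\<Union>p\<in>P. lists (E p)) < card (lists V)"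
    by (simp only: of_nat_less_iff)
  moreover have "finite (\<Union>p\<in>P. lists (E p))"
    using P fin_E by (simp add: lists_def finite_lists_length_eq)
  ultimately have "\<not> lists V \<subseteq> (\<Union>p\<in>P. lists (E p))"
    using card_mono leD by blast
  then show ?thesis
    unfolding lists_def by blast
qed

lemma exists_distinguishing_list:
  fixes F :: "'i \<Rightarrow> 'a \<Rightarrow> 'b" and \<delta> :: real
  assumes V: "finite V" "V \<noteq> {}" and I: "finite I" and "\<delta> \<le> 1"
    and separated: "\<And>i j x. i \<in> I \<Longrightarrow> j \<in> I \<Longrightarrow> x \<in> V \<Longrightarrow> F i x \<noteq> F j x
      \<Longrightarrow> \<delta> * card V \<le> card {x \<in> V. F i x \<noteq> F j x}"
    and union_bound: "real (card I) ^ 2 * (1 - \<delta>) ^ m < 1"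
  shows "\<exists>xs. set xs \<subseteq> V \<and> length xs = m \<and>
    (\<forall>i\<in>I. \<forall>j\<in>I. (\<forall>x\<in>set xs. F i x = F j x) \<longrightarrow> (\<forall>x\<in>V. F i x = F j x))"
proof -
  define P where "P = {(i, j) \<in> I \<times> I. \<exists>x\<in>V. F i x \<noteq> F j x}"
  define E where "E = (\<lambda>(i, j). {x \<in> V. F i x = F j x})"
  have "finite P"
    unfolding P_def using I by (auto intro: finite_subset)
  moreover have "E p \<subseteq> V" for p
    unfolding E_def by auto
  moreover have "real (card (E p)) \<le> (1 - \<delta>) * card V" if "p \<in> P" for p
  proof -
    obtain i j x where p: "p = (i, j)" "i \<in> I" "j \<in> I" "x \<in> V" "F i x \<noteq> F j x"
      using \<open>p \<in> P\<close> unfolding P_def by blast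
    define D where "D = {x \<in> V. F i x \<noteq> F j x}"
    have "E p = V - D" "D \<subseteq> V"
      unfolding E_def D_def p by auto
    then have "real (card (E p)) = card V - real (card D)"
      using V(1) card_mono[OF V(1) \<open>D \<subseteq> V\<close>]
      by (simp add: card_Diff_subset finite_subset of_nat_diff)
    then show ?thesis
      using separated[OF p(2-5)] unfolding D_def by (simp add: algebra_simps)
  qed
  moreover have "card P * (1 - \<delta>) ^ m < 1"
  proof -
    have "card P \<le> card (I \<times> I)"
      unfolding P_def using I by (intro card_mono) auto
    then have "real (card P) \<le> real (card I) ^ 2"
      by (simp add: card_cartesian_product power2_eq_square flip: of_nat_mult)
    then have "card P * (1 - \<delta>) ^ m \<le> real (card I) ^ 2 * (1 - \<delta>) ^ m"
      using \<open>\<delta> \<le> 1\<close> by (intro mult_right_mono) simp_all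
    then show ?thesis
      using union_bound by linarith
  qed
  ultimately obtain xs where xs: "set xs \<subseteq> V" "length xs = m" "\<forall>p\<in>P. \<not> set xs \<subseteq> E p"
    using exists_list_not_subset_any[OF V] by metis
  have "\<forall>x\<in>V. F i x = F j x" if "i \<in> I" "j \<in> I" "\<forall>x\<in>set xs. F i x = F j x" for i j
    using xs that unfolding P_def E_def by blast
  then show ?thesis
    using xs(1,2) by blast
qed

section \<open>Querying a distinguishing list, then guessing\<close>

lemma maximizers_nonempty: "maximizers n f \<noteq> {}"
proof -
  let ?V = "carrier_vec n :: bit Matrix.vec set"
  have "finite (f ` ?V)"
    using finite_bit_vecs by simp
  moreover have "f ` ?V \<noteq> {}"
    using zero_carrier_vec[of n] by (metis empty_iff image_is_empty)
  ultimately have "Max (f ` ?V) \<in> f ` ?V" "\<forall>y\<in>?V. f y \<le> Max (f ` ?V)"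
    by simp_all
  then obtain x where "x \<in> ?V" "\<forall>y\<in>?V. f y \<le> f x"
    by force
  then show ?thesis
    unfolding maximizers_def by blast
qed

lemma maximizers_cong:
  "(\<And>x. x \<in> carrier_vec n \<Longrightarrow> f x = g x) \<Longrightarrow> maximizers n f = maximizers n g"
  unfolding maximizers_def by (intro Collect_cong) (metis (no_types, lifting))

definition distinguishes :: "nat \<Rightarrow> (bit Matrix.vec \<Rightarrow> real) set \<Rightarrow> bit Matrix.vec list \<Rightarrow> bool" where
  "distinguishes n C xs \<longleftrightarrow> set xs \<subseteq> carrier_vec n \<and>
     (\<forall>f\<in>C. \<forall>g\<in>C. (\<forall>x\<in>set xs. f x = g x) \<longrightarrow> (\<forall>x\<in>carrier_vec n. f x = g x))"

text \<open>If no function of \<open>C\<close> is consistent with \<open>h\<close>, the inner choice is arbitrary, but the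
  guess is still a point of the cube, which is all that validity of the algorithm needs.\<close>

definition consistent_guess ::
    "nat \<Rightarrow> (bit Matrix.vec \<Rightarrow> real) set \<Rightarrow> (bit Matrix.vec \<times> real) list \<Rightarrow> bit Matrix.vec" where
  "consistent_guess n C h = (SOME y. y \<in> maximizers n (SOME g. g \<in> C \<and> (\<forall>(x, v)\<in>set h. g x = v)))"

lemma consistent_guess_in_maximizers:
  "consistent_guess n C h \<in> maximizers n (SOME g. g \<in> C \<and> (\<forall>(x, v)\<in>set h. g x = v))"
proof -
  have "\<exists>y. y \<in> maximizers n g" for g
    using maximizers_nonempty by (simp add: ex_in_conv)
  then show ?thesis
    unfolding consistent_guess_def by (rule someI_ex)
qed

lemma consistent_guess_carrier: "consistent_guess n C h \<in> carrier_vec n"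
  using consistent_guess_in_maximizers[of n C h] unfolding maximizers_def by simp

lemma consistent_guess_maximizes:
  assumes xs: "distinguishes n C xs" and f: "f \<in> C"
  shows "consistent_guess n C (map (\<lambda>x. (x, f x)) xs) \<in> maximizers n f"
proof -
  define g where "g = (SOME g. g \<in> C \<and> (\<forall>(x, v)\<in>set (map (\<lambda>x. (x, f x)) xs). g x = v))"
  have "g \<in> C \<and> (\<forall>(x, v)\<in>set (map (\<lambda>x. (x, f x)) xs). g x = v)"
    unfolding g_def by (rule someI[of _ f]) (simp add: f)
  then have "maximizers n g = maximizers n f"
    using xs f unfolding distinguishes_def by (intro maximizers_cong) simp
  then show ?thesis
    using consistent_guess_in_maximizers[of n C "map (\<lambda>x. (x, f x)) xs"] unfolding g_def by simp
qed

definition query_then_guess :: "nat \<Rightarrow> (bit Matrix.vec \<Rightarrow> real) set \<Rightarrow> bit Matrix.vec list \<Rightarrow> bb_alg" where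
  "query_then_guess n C xs h =
     return_pmf (if length h < length xs then xs ! length h else consistent_guess n C h)"

lemma valid_alg_query_then_guess:
  "set xs \<subseteq> carrier_vec n \<Longrightarrow> valid_alg n (query_then_guess n C xs)"
  unfolding valid_alg_def query_then_guess_def using consistent_guess_carrier by auto

lemma hist_query_then_guess:
  "t \<le> length xs \<Longrightarrow> hist (query_then_guess n C xs) f t = return_pmf (map (\<lambda>x. (x, f x)) (take t xs))"
  by (induction t) (simp_all add: query_then_guess_def take_Suc_conv_app_nth bind_return_pmf)

lemma hist_extends:
  assumes "t \<le> t'" "h' \<in> set_pmf (hist A f t')"
  shows "\<exists>h\<in>set_pmf (hist A f t). set h \<subseteq> set h'"
  using assms
proof (induction t' arbitrary: h' rule: dec_induct)
  case base
  then show ?case by blast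
next
  case (step t')
  then obtain h'' x where h'': "h'' \<in> set_pmf (hist A f t')" "h' = h'' @ [(x, f x)]"
    by auto
  then obtain h where "h \<in> set_pmf (hist A f t)" "set h \<subseteq> set h''"
    using step.IH by blast
  then show ?case
    using h''(2) by auto
qed

lemma expected_runtime_le:
  assumes found: "\<forall>h\<in>set_pmf (hist A f t). \<exists>p\<in>set h. fst p \<in> maximizers n f"
  shows "expected_runtime n A f \<le> of_nat t"
proof -
  define miss where
    "miss s = ennreal (measure_pmf.prob (hist A f s) {h. \<forall>p\<in>set h. fst p \<notin> maximizers n f})" for s
  have "miss s = 0" if "t \<le> s" for s
  proof -
    have "\<exists>p\<in>set h'. fst p \<in> maximizers n f" if h': "h' \<in> set_pmf (hist A f s)" for h'
    proof -
      obtain h where "h \<in> set_pmf (hist A f t)" "set h \<subseteq> set h'"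
        using hist_extends[OF \<open>t \<le> s\<close> h'] by blast
      then show ?thesis
        using found by blast
    qed
    then have "set_pmf (hist A f s) \<inter> {h. \<forall>p\<in>set h. fst p \<notin> maximizers n f} = {}"
      by blast
    then show ?thesis
      unfolding miss_def by (simp add: measure_pmf_zero_iff)
  qed
  then have "expected_runtime n A f = (\<Sum>s<t. miss s)"
    unfolding expected_runtime_def miss_def[symmetric] by (intro suminf_finite) auto
  also have "\<dots> \<le> (\<Sum>s<t. 1)"
    unfolding miss_def by (intro sum_mono) (simp add: ennreal_leI)
  finally show ?thesis
    by simp
qed

lemma bb_complexity_le_distinguishes:
  assumes xs: "distinguishes n C xs"
  shows "bb_complexity n C \<le> of_nat (length xs + 1)"
proof -
  define A where "A = query_then_guess n C xs"
  have "expected_runtime n A f \<le> of_nat (length xs + 1)" if f: "f \<in> C" for f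
  proof (rule expected_runtime_le)
    define H where "H = map (\<lambda>x. (x, f x)) xs"
    have "hist A f (length xs + 1) = return_pmf (H @ [(consistent_guess n C H, f (consistent_guess n C H))])"
      using hist_query_then_guess[of "length xs" xs]
      by (simp add: A_def H_def query_then_guess_def bind_return_pmf)
    then show "\<forall>h\<in>set_pmf (hist A f (length xs + 1)). \<exists>p\<in>set h. fst p \<in> maximizers n f"
      using consistent_guess_maximizes[OF xs f] by (simp add: H_def)
  qed
  moreover have "valid_alg n A"
    using xs unfolding A_def distinguishes_def by (simp add: valid_alg_query_then_guess)
  then have "bb_complexity n C \<le> (SUP f\<in>C. expected_runtime n A f)"
    unfolding bb_complexity_def by (intro INF_lower) simp
  ultimately show ?thesis
    by (meson SUP_least order_trans)
qed

lemma distinguishes_if_represented: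
  assumes xs: "distinguishes n D xs"
    and represented: "\<And>f. f \<in> C \<Longrightarrow> \<exists>g\<in>D. \<forall>x\<in>carrier_vec n. f x = g x"
  shows "distinguishes n C xs"
proof -
  have sub: "set xs \<subseteq> carrier_vec n"
    and dist: "\<forall>g\<in>D. \<forall>g'\<in>D. (\<forall>x\<in>set xs. g x = g' x) \<longrightarrow> (\<forall>x\<in>carrier_vec n. g x = g' x)"
    using xs unfolding distinguishes_def by blast+
  have "\<forall>x\<in>carrier_vec n. f x = f' x"
    if f: "f \<in> C" and f': "f' \<in> C" and agree_xs: "\<forall>x\<in>set xs. f x = f' x" for f f'
  proof -
    obtain g where g: "g \<in> D" "\<forall>x\<in>carrier_vec n. f x = g x"
      using represented[OF f] by blast
    obtain g' where g': "g' \<in> D" "\<forall>x\<in>carrier_vec n. f' x = g' x"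
      using represented[OF f'] by blast
    have "\<forall>x\<in>set xs. g x = g' x"
    proof
      fix x
      assume "x \<in> set xs"
      then have "x \<in> carrier_vec n"
        using sub by blast
      then have "g x = f x"
        using g(2) by simp
      also have "\<dots> = f' x"
        using agree_xs \<open>x \<in> set xs\<close> by simp
      also have "\<dots> = g' x"
        using g'(2) \<open>x \<in> carrier_vec n\<close> by simp
      finally show "g x = g' x" .
    qed
    then have "\<forall>x\<in>carrier_vec n. g x = g' x"
      using dist g(1) g'(1) by blast
    then show ?thesis
      using g(2) g'(2) by simp
  qed
  then show ?thesis
    using sub unfolding distinguishes_def by blast
qed

definition affine_params :: "nat \<Rightarrow> (bit Matrix.vec \<times> bit) list set" where
  "affine_params n = {ps. set ps \<subseteq> carrier_vec n \<times> UNIV \<and> length ps = n}"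

lemma finite_affine_params: "finite (affine_params n)"
proof -
  have "finite ((carrier_vec n :: bit Matrix.vec set) \<times> (UNIV :: bit set))"
    using finite_bit_vecs finite_UNIV_bit by simp
  then show ?thesis
    unfolding affine_params_def by (rule finite_lists_length_eq)
qed

lemma card_affine_params: "card (affine_params n) = 2 ^ (n * (n + 1))"
proof -
  let ?A = "(carrier_vec n :: bit Matrix.vec set) \<times> (UNIV :: bit set)"
  have "finite ?A" "card ?A = 2 ^ (n + 1)"
    using finite_bit_vecs finite_UNIV_bit
    by (simp_all add: card_cartesian_product card_bit_vecs card_UNIV_bit)
  then show ?thesis
    unfolding affine_params_def card_lists_length_eq[OF \<open>finite ?A\<close>]
    by (metis mult.commute power_mult)
qed

lemma affine_onemax_is_affine_indicator_sum:
  assumes "f \<in> affine_onemax n"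
  shows "\<exists>ps\<in>affine_params n. \<forall>x\<in>carrier_vec n. f x = affine_indicator_sum ps x"
proof -
  obtain M b where M: "M \<in> carrier_mat n n" and b: "b \<in> carrier_vec n"
    and f: "f = (\<lambda>x. onemax n (M *\<^sub>v x + b))"
    using assms unfolding affine_onemax_def by blast
  define ps where "ps = map (\<lambda>i. (row M i, vec_index b i)) [0..<n]"
  have "ps \<in> affine_params n"
    unfolding ps_def affine_params_def using M by auto
  moreover have "f x = affine_indicator_sum ps x" if "x \<in> carrier_vec n" for x
  proof -
    have "f x = (\<Sum>i<n. affine_indicator (row M i) (vec_index b i) x)"
      unfolding f onemax_def affine_indicator_def using M b by (intro sum.cong) auto
    also have "\<dots> = affine_indicator_sum ps x"
      by (simp add: affine_indicator_sum_def ps_def interv_sum_list_conv_sum_set_nat atLeast0LessThan)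
    finally show ?thesis .
  qed
  ultimately show ?thesis
    by blast
qed

lemma one_minus_inverse_power_le_half:
  assumes "1 \<le> k"
  shows "(1 - 1 / real k) ^ k \<le> 1 / 2"
proof -
  have "(1 - 1 / real k) ^ k \<le> exp (- 1 / real k) ^ k"
    using assms exp_ge_add_one_self[of "- 1 / real k"] by (intro power_mono) simp_all
  also have "\<dots> = exp (- 1)"
    using assms by (simp flip: exp_of_nat_mult)
  also have "\<dots> \<le> 1 / 2"
    using exp_ge_add_one_self[of 1] by (simp add: exp_minus field_simps)
  finally show ?thesis .
qed

lemma two_power_one_minus_inverse_power_lt_1:
  assumes "1 \<le> k"
  shows "2 ^ N * (1 - 1 / real k) ^ (k * (N + 1)) < 1"
proof -
  have "(1 - 1 / real k) ^ (k * (N + 1)) \<le> (1 / 2) ^ (N + 1)"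
    unfolding power_mult using one_minus_inverse_power_le_half[OF assms] assms
    by (intro power_mono) simp_all
  then have "2 ^ N * (1 - 1 / real k) ^ (k * (N + 1)) \<le> 2 ^ N * (1 / 2) ^ (N + 1)"
    by (intro mult_left_mono) simp_all
  then show ?thesis
    by (simp add: power_one_over)
qed

lemma exists_list_distinguishing_affine_indicator_sums:
  assumes "1 \<le> n"
  shows "\<exists>xs. length xs = 2 * n * (2 * n * (n + 1) + 1) \<and>
    distinguishes n (affine_indicator_sum ` affine_params n) xs"
proof -
  let ?V = "carrier_vec n :: bit Matrix.vec set"
  have V: "finite ?V" "?V \<noteq> {}"
    using finite_bit_vecs zero_carrier_vec by blast+
  have separated: "1 / real (2 * n) * card ?V
      \<le> card {x \<in> ?V. affine_indicator_sum ps x \<noteq> affine_indicator_sum qs x}"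
    if "ps \<in> affine_params n" "qs \<in> affine_params n" "y \<in> ?V"
      "affine_indicator_sum ps y \<noteq> affine_indicator_sum qs y" for ps qs y
    using card_disagreement_ge[of ps n n qs y] that assms unfolding affine_params_def
    by (simp add: card_bit_vecs field_simps)
  have "real (card (affine_params n)) ^ 2 = 2 ^ (n * (n + 1) * 2)"
    unfolding card_affine_params power_mult by simp
  then have union_bound: "real (card (affine_params n)) ^ 2
      * (1 - 1 / real (2 * n)) ^ (2 * n * (2 * n * (n + 1) + 1)) < 1"
    using two_power_one_minus_inverse_power_lt_1[of "2 * n" "2 * n * (n + 1)"] assms
    by (simp add: ac_simps)
  have "\<exists>xs. set xs \<subseteq> ?V \<and> length xs = 2 * n * (2 * n * (n + 1) + 1) \<and>
    (\<forall>ps\<in>affine_params n. \<forall>qs\<in>affine_params n.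
      (\<forall>x\<in>set xs. affine_indicator_sum ps x = affine_indicator_sum qs x)
      \<longrightarrow> (\<forall>x\<in>?V. affine_indicator_sum ps x = affine_indicator_sum qs x))"
    by (rule exists_distinguishing_list[where F = affine_indicator_sum and
        \<delta> = "1 / real (2 * n)", OF V finite_affine_params _ separated union_bound])
      (use assms in simp)
  then show ?thesis
    unfolding distinguishes_def by blast
qed

lemma bb_complexity_affine_onemax_le:
  assumes "1 \<le> n"
  shows "bb_complexity n (affine_onemax n) \<le> of_nat (2 * n * (2 * n * (n + 1) + 1) + 1)"
proof -
  obtain xs where len: "length xs = 2 * n * (2 * n * (n + 1) + 1)"
    and dist: "distinguishes n (affine_indicator_sum ` affine_params n) xs"
    using exists_list_distinguishing_affine_indicator_sums[OF assms] by blast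
  have "distinguishes n (affine_onemax n) xs"
  proof (rule distinguishes_if_represented[OF dist])
    fix f
    assume "f \<in> affine_onemax n"
    then obtain ps where "ps \<in> affine_params n" "\<forall>x\<in>carrier_vec n. f x = affine_indicator_sum ps x"
      using affine_onemax_is_affine_indicator_sum by blast
    then show "\<exists>g\<in>affine_indicator_sum ` affine_params n. \<forall>x\<in>carrier_vec n. f x = g x"
      by blast
  qed
  then show ?thesis
    using bb_complexity_le_distinguishes[of n "affine_onemax n" xs] len by simp
qed

lemma cubic_le_power10_ln_squared:
  assumes n: "2 \<le> n"
  shows "real (2 * n * (2 * n * (n + 1) + 1) + 1) \<le> 11 / (ln 2)\<^sup>2 * real n ^ 10 * (ln (real n))\<^sup>2"
proof -
  define m where "m = 2 * n * (2 * n * (n + 1) + 1) + 1"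
  have "n ^ 2 \<le> n ^ 3" "n ^ 3 \<le> n ^ 10"
    using n by (intro power_increasing; simp)+
  moreover have "n \<le> n ^ 3" "1 \<le> n ^ 3"
    using power_increasing[of 1 3 n] power_increasing[of 0 3 n] n by simp_all
  moreover have "m = 4 * n ^ 3 + 4 * n ^ 2 + 2 * n + 1"
    unfolding m_def by (simp add: power2_eq_square power3_eq_cube algebra_simps)
  ultimately have "m \<le> 11 * n ^ 10"
    by linarith
  then have "real m \<le> 11 * real n ^ 10"
    by (metis of_nat_le_iff of_nat_mult of_nat_numeral of_nat_power)
  have ratio: "1 \<le> (ln (real n))\<^sup>2 / (ln 2)\<^sup>2"
    using n by (simp add: power_mono)
  have "real m \<le> 11 * real n ^ 10 * 1"
    using \<open>real m \<le> 11 * real n ^ 10\<close> by simp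
  also have "\<dots> \<le> 11 * real n ^ 10 * ((ln (real n))\<^sup>2 / (ln 2)\<^sup>2)"
    by (rule mult_left_mono[OF ratio]) simp
  also have "\<dots> = 11 / (ln 2)\<^sup>2 * real n ^ 10 * (ln (real n))\<^sup>2"
    by simp
  finally show ?thesis
    unfolding m_def .
qed

theorem corollary1:
  shows "\<exists>c::real. \<exists>N::nat. \<forall>n\<ge>N.
    bb_complexity n (affine_onemax n) \<le> ennreal (c * real n ^ 10 * (ln (real n))\<^sup>2)"
proof -
  have "bb_complexity n (affine_onemax n) \<le> ennreal (11 / (ln 2)\<^sup>2 * real n ^ 10 * (ln (real n))\<^sup>2)"
    if n: "2 \<le> n" for n :: nat
  proof -
    have "bb_complexity n (affine_onemax n) \<le> of_nat (2 * n * (2 * n * (n + 1) + 1) + 1)"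
      using n by (intro bb_complexity_affine_onemax_le) simp
    also have "\<dots> \<le> ennreal (11 / (ln 2)\<^sup>2 * real n ^ 10 * (ln (real n))\<^sup>2)"
      unfolding ennreal_of_nat_eq_real_of_nat by (rule ennreal_leI[OF cubic_le_power10_ln_squared[OF n]])
    finally show ?thesis .
  qed
  then show ?thesis
    by blast
qed

end
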